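(* Let $f$ be a generalized timelike minimal surface with real Weierstrass data $(g_1,g_2,\hat{\omega}_1du,\hat{\omega}_2dv)$, and let $p$ be a singular point with $\hat\omega_1\hat\omega_2(p)=0$ and $\operatorname{rank}(df_p)=1$. Then: (i) If $\hat\omega_1(p)=0$, then $f$ is a front at $p$ if and only if $(g_1)_u(p)\neq0$; if $\hat\omega_2(p)=0$, then $f$ is a front at $p$ if and only if $(g_2)_v(p)\neq0$. (ii) If $\hat\omega_1(p)=0$, then $p$ is non-degenerate if and only if $(\hat\omega_1)_u(p)\neq0$ and $g_1g_2(p)\neq1$; if $\hat\omega_2(p)=0$, then $p$ is non-degenerate if and only if $(\hat\omega_2)_v(p)\neq0$ and $g_1g_2(p)\neq1$.
   Context: $\mathbb{L}^3$ is $\mathbb{R}^3$ with the Lorentzian metric $\langle\,,\rangle=-dt^2+dx^2+dy^2$. A generalized timelike minimal surface is a non-constant smooth map $f\colon\Sigma\to\mathbb{L}^3$ from a 2-manifold which is an immersion on an open dense subset and such that near each point there are local coordinates $(u,v)$ with $\langle f_u,f_u\rangle=\langle f_v,f_v\rangle=0$ and $f_{uv}=0$. In such coordinates $f(u,v)=\tfrac12\int_{u_0}^u(-1-g_1^2,1-g_1^2,2g_1)\hat{\omega}_1du+\tfrac12\int_{v_0}^v(1+g_2^2,1-g_2^2,-2g_2)\hat{\omega}_2dv+f(u_0,v_0)$, with $g_1,\hat\omega_1$ functions of $u$ and $g_2,\hat\omega_2$ functions of $v$; this quadruple is the real Weierstrass data. Standing assumption: $g_1,g_2$ take finite real values at every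 singular point (point where $f$ is not an immersion). Such $f$ is a frontal with unit normal $n=(g_1+g_2,\,-g_1+g_2,\,1+g_1g_2)/\sqrt{(1-g_1g_2)^2+2(g_1+g_2)^2}$ (Euclidean-orthogonal to $df$); $f$ is a front at $p$ if $(f,n)$ is an immersion at $p$. The signed area density is $\lambda=\det(f_u,f_v,n)$, and a singular point $p$ is non-degenerate if $d\lambda_p\neq0$. *)

theory Defs
  imports "HOL-Analysis.Analysis"
begin

definition smooth_real_on :: "real set \<Rightarrow> (real \<Rightarrow> real) \<Rightarrow> bool" where
  "smooth_real_on S g \<longleftrightarrow> (\<forall>k. \<forall>x\<in>S. ((deriv ^^ k) g) differentiable (at x))"

definition nullU :: "real \<Rightarrow> real^3" where
  "nullU g1 = vector [-1 - g1^2, 1 - g1^2, 2 * g1]"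

definition nullV :: "real \<Rightarrow> real^3" where
  "nullV g2 = vector [1 + g2^2, 1 - g2^2, -2 * g2]"

text \<open>Unit normal (Euclidean) in terms of the values of g1, g2.\<close>
definition unit_normal :: "real \<Rightarrow> real \<Rightarrow> real^3" where
  "unit_normal a b = (1 / sqrt ((1 - a*b)^2 + 2*(a+b)^2)) *\<^sub>R vector [a + b, -a + b, 1 + a*b]"

definition immersion_at :: "(real \<times> real \<Rightarrow> 'b::real_normed_vector) \<Rightarrow> real \<times> real \<Rightarrow> bool" where
  "immersion_at F q \<longleftrightarrow> (\<exists>F'. (F has_derivative F') (at q) \<and> inj F')"

definition det3 :: "real^3 \<Rightarrow> real^3 \<Rightarrow> real^3 \<Rightarrow> real" where
  "det3 a b c = det (vector [a, b, c] :: real^3^3)"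

definition partial_u :: "(real \<times> real \<Rightarrow> real^3) \<Rightarrow> real \<times> real \<Rightarrow> real^3" where
  "partial_u F q = frechet_derivative F (at q) (1, 0)"

definition partial_v :: "(real \<times> real \<Rightarrow> real^3) \<Rightarrow> real \<times> real \<Rightarrow> real^3" where
  "partial_v F q = frechet_derivative F (at q) (0, 1)"

definition gen_timelike_min_surface ::
  "real set \<Rightarrow> real set \<Rightarrow> (real \<Rightarrow> real) \<Rightarrow> (real \<Rightarrow> real) \<Rightarrow> (real \<Rightarrow> real) \<Rightarrow> (real \<Rightarrow> real)
   \<Rightarrow> (real \<times> real \<Rightarrow> real^3) \<Rightarrow> bool" where
  "gen_timelike_min_surface I J g1 w1 g2 w2 f \<longleftrightarrow>
     open I \<and> open J \<and>
     smooth_real_on I g1 \<and> smooth_real_on I w1 \<and> smooth_real_on J g2 \<and> smooth_real_on J w2 \<and>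
     (\<exists>F1 F2. (\<forall>u\<in>I. (F1 has_vector_derivative ((1/2 * w1 u) *\<^sub>R nullU (g1 u))) (at u)) \<and>
              (\<forall>v\<in>J. (F2 has_vector_derivative ((1/2 * w2 v) *\<^sub>R nullV (g2 v))) (at v)) \<and>
              (\<forall>u\<in>I. \<forall>v\<in>J. f (u, v) = F1 u + F2 v)) \<and>
     (\<exists>W. open W \<and> W \<subseteq> I \<times> J \<and> I \<times> J \<subseteq> closure W \<and> (\<forall>q\<in>W. immersion_at f q))"

definition normal_of :: "(real \<Rightarrow> real) \<Rightarrow> (real \<Rightarrow> real) \<Rightarrow> real \<times> real \<Rightarrow> real^3" where
  "normal_of g1 g2 q = unit_normal (g1 (fst q)) (g2 (snd q))"

definition front_at :: "(real \<times> real \<Rightarrow> real^3) \<Rightarrow> (real \<times> real \<Rightarrow> real^3) \<Rightarrow> real \<times> real \<Rightarrow> bool" where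
  "front_at f n p \<longleftrightarrow> immersion_at (\<lambda>q. (f q, n q)) p"

definition area_density :: "(real \<times> real \<Rightarrow> real^3) \<Rightarrow> (real \<times> real \<Rightarrow> real^3) \<Rightarrow> real \<times> real \<Rightarrow> real" where
  "area_density f n q = det3 (partial_u f q) (partial_v f q) (n q)"

definition singular_point :: "(real \<times> real \<Rightarrow> real^3) \<Rightarrow> real \<times> real \<Rightarrow> bool" where
  "singular_point f p \<longleftrightarrow> \<not> immersion_at f p"

definition nondegenerate :: "(real \<times> real \<Rightarrow> real^3) \<Rightarrow> (real \<times> real \<Rightarrow> real^3) \<Rightarrow> real \<times> real \<Rightarrow> bool" where
  "nondegenerate f n p \<longleftrightarrow>
     (\<exists>L. (area_density f n has_derivative L) (at p) \<and> L \<noteq> (\<lambda>_. 0))"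

end

theory Submission
  imports Defs
begin

(* On the coordinate patch f_u = (w1/2) nullU(g1) and f_v = (w2/2) nullV(g2), and nullU, nullV never
   vanish; so rank one together with w1 w2 = 0 means that exactly one of w1, w2 vanishes at p.
   The normal is n = N(g1, g2), where both partial derivatives of N(a, b) = unit_normal a b are
   nonzero everywhere.  If w1(p) = 0, then d(f, n)_p sends (x, y) to (y f_v, x (g1)_u N_a + y (g2)_v N_b),
   which is injective iff (g1)_u(p) \<noteq> 0.  Finally the area density is w1 w2 \<rho>(g1, g2) with
   \<rho>(a, b) = -(1/2)(1 - ab) sqrt((1 - ab)^2 + 2(a + b)^2); at p only the term (w1)_u w2 \<rho> du of its
   differential survives, and \<rho> vanishes exactly where g1 g2 = 1. *)

lemma has_derivative_fst_compose:
  assumes "(g has_vector_derivative d) (at (fst p))"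
  shows "((\<lambda>q. g (fst q)) has_derivative (\<lambda>z. fst z *\<^sub>R d)) (at p)"
  using has_derivative_compose[OF has_derivative_fst[OF has_derivative_ident] assms[unfolded has_vector_derivative_def]]
  by simp

lemma has_derivative_snd_compose:
  assumes "(g has_vector_derivative d) (at (snd p))"
  shows "((\<lambda>q. g (snd q)) has_derivative (\<lambda>z. snd z *\<^sub>R d)) (at p)"
  using has_derivative_compose[OF has_derivative_snd[OF has_derivative_ident] assms[unfolded has_vector_derivative_def]]
  by simp

lemma linear_pair_eq:
  fixes N :: "real \<times> real \<Rightarrow> 'a::real_vector"
  assumes "linear N"
  shows "N (x, y) = x *\<^sub>R N (1, 0) + y *\<^sub>R N (0, 1)"
proof -
  have "N (x, y) = N (x *\<^sub>R (1, 0) + y *\<^sub>R (0, 1))" by simp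
  also have "\<dots> = x *\<^sub>R N (1, 0) + y *\<^sub>R N (0, 1)"
    by (simp only: linear_add[OF assms] linear_cmul[OF assms])
  finally show ?thesis .
qed

lemma inj_pair_scaleR_iff_snd:
  fixes b c d :: "'a::real_vector"
  assumes "b \<noteq> 0"
  shows "inj (\<lambda>z::real \<times> real. (snd z *\<^sub>R b, fst z *\<^sub>R c + snd z *\<^sub>R d)) \<longleftrightarrow> c \<noteq> 0"
proof
  assume "inj (\<lambda>z::real \<times> real. (snd z *\<^sub>R b, fst z *\<^sub>R c + snd z *\<^sub>R d))"
  then show "c \<noteq> 0" by (fastforce dest: injD[of _ "(1, 0)" "(0, 0)"])
next
  assume "c \<noteq> 0"
  show "inj (\<lambda>z::real \<times> real. (snd z *\<^sub>R b, fst z *\<^sub>R c + snd z *\<^sub>R d))"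
  proof (rule injI)
    fix x y :: "real \<times> real"
    assume eq: "(snd x *\<^sub>R b, fst x *\<^sub>R c + snd x *\<^sub>R d) = (snd y *\<^sub>R b, fst y *\<^sub>R c + snd y *\<^sub>R d)"
    then have "snd x = snd y" using assms by auto
    with eq \<open>c \<noteq> 0\<close> have "fst x = fst y" by auto
    with \<open>snd x = snd y\<close> show "x = y" by (simp add: prod_eq_iff)
  qed
qed

lemma inj_pair_scaleR_iff_fst:
  fixes a c d :: "'a::real_vector"
  assumes "a \<noteq> 0"
  shows "inj (\<lambda>z::real \<times> real. (fst z *\<^sub>R a, fst z *\<^sub>R c + snd z *\<^sub>R d)) \<longleftrightarrow> d \<noteq> 0"
proof -
  define G where "G = (\<lambda>z::real \<times> real. (snd z *\<^sub>R a, fst z *\<^sub>R d + snd z *\<^sub>R c))"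
  have "(\<lambda>z::real \<times> real. (fst z *\<^sub>R a, fst z *\<^sub>R c + snd z *\<^sub>R d)) = G \<circ> prod.swap"
    by (simp add: G_def fun_eq_iff add.commute)
  moreover have "inj (G \<circ> prod.swap) \<longleftrightarrow> inj G"
    by (metis comp_assoc comp_id inj_compose inj_swap swap_comp_swap)
  ultimately show ?thesis
    using inj_pair_scaleR_iff_snd[OF assms, of d c] by (simp add: G_def)
qed

lemma dim_range_derivative_neq_0:
  fixes f :: "real \<times> real \<Rightarrow> 'b::euclidean_space"
  assumes "(f has_derivative (\<lambda>z. fst z *\<^sub>R a + snd z *\<^sub>R b)) (at p)"
    and "dim (range (frechet_derivative f (at p))) \<noteq> 0"
  shows "a \<noteq> 0 \<or> b \<noteq> 0"
proof (rule ccontr)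
  assume "\<not> (a \<noteq> 0 \<or> b \<noteq> 0)"
  then have "range (frechet_derivative f (at p)) \<subseteq> {0}"
    by (auto simp flip: frechet_derivative_at[OF assms(1)])
  then show False using assms(2) by simp
qed

lemma immersion_at_iff_inj: "(F has_derivative D) (at q) \<Longrightarrow> immersion_at F q \<longleftrightarrow> inj D"
  unfolding immersion_at_def using has_derivative_unique by blast

lemma nondegenerate_iff_derivative_neq_0:
  "(area_density f n has_derivative L) (at p) \<Longrightarrow> nondegenerate f n p \<longleftrightarrow> L \<noteq> (\<lambda>_. 0)"
  unfolding nondegenerate_def using has_derivative_unique by blast

lemma smooth_real_on_has_real_derivative:
  "smooth_real_on S g \<Longrightarrow> x \<in> S \<Longrightarrow> (g has_real_derivative deriv g x) (at x)"
  unfolding smooth_real_on_def by (metis DERIV_deriv_iff_real_differentiable funpow_0)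

lemma nullU_neq_0: "nullU a \<noteq> 0"
proof
  assume "nullU a = 0"
  then have "-1 - a\<^sup>2 = 0" unfolding nullU_def by (metis vector_3(1) zero_index)
  then show False by (smt (verit) zero_le_power2)
qed

lemma nullV_neq_0: "nullV a \<noteq> 0"
proof
  assume "nullV a = 0"
  then have "1 + a\<^sup>2 = 0" unfolding nullV_def by (metis vector_3(1) zero_index)
  then show False by (smt (verit) zero_le_power2)
qed

lemma unit_normal_denominator_pos: "(1 - a * b)\<^sup>2 + 2 * (a + b)\<^sup>2 > (0::real)"
proof -
  have "(1 - a * b)\<^sup>2 + (a + b)\<^sup>2 = (1 + a\<^sup>2) * (1 + b\<^sup>2)"
    by (simp add: power2_eq_square algebra_simps)
  moreover have "(1 + a\<^sup>2) * (1 + b\<^sup>2) \<ge> 1"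
    by (simp add: algebra_simps add_nonneg_nonneg)
  moreover have "(a + b)\<^sup>2 \<ge> 0" by simp
  ultimately show ?thesis by linarith
qed

lemma det3_scaleR: "det3 (r *\<^sub>R x) (s *\<^sub>R y) (t *\<^sub>R z) = r * s * t * det3 x y z"
  unfolding det3_def det_3 by (simp add: algebra_simps)

definition area_density_factor :: "real \<Rightarrow> real \<Rightarrow> real" where
  "area_density_factor a b = - (1 / 2) * (1 - a * b) * sqrt ((1 - a * b)\<^sup>2 + 2 * (a + b)\<^sup>2)"

lemma area_density_factor_eq_0_iff: "area_density_factor a b = 0 \<longleftrightarrow> a * b = 1"
  using unit_normal_denominator_pos[of a b] by (simp add: area_density_factor_def)

lemma area_density_factor_differentiable:
  "(\<lambda>x. area_density_factor (fst x) (snd x)) differentiable (at (a, b))"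
proof -
  have "\<exists>D. ((\<lambda>x. area_density_factor (fst x) (snd x)) has_derivative D) (at (a, b))"
    unfolding area_density_factor_def using unit_normal_denominator_pos[of a b]
    by (intro exI) (rule derivative_eq_intros refl | simp)+
  then show ?thesis by (simp add: differentiable_def)
qed

lemma det3_nullU_nullV_unit_normal:
  "det3 (nullU a) (nullV b) (unit_normal a b) = 4 * area_density_factor a b"
proof -
  define R where "R = (1 - a * b)\<^sup>2 + 2 * (a + b)\<^sup>2"
  have "R > 0" using unit_normal_denominator_pos R_def by simp
  have "det3 (nullU a) (nullV b) (vector [a + b, -a + b, 1 + a * b]) = -2 * (1 - a * b) * R"
    unfolding det3_def det_3 nullU_def nullV_def R_def by (simp add: algebra_simps power2_eq_square)
  then have "det3 (nullU a) (nullV b) (unit_normal a b) = -2 * (1 - a * b) * R / sqrt R"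
    using det3_scaleR[of 1 _ 1 _ "1 / sqrt R"] by (simp add: unit_normal_def R_def)
  also have "\<dots> = -2 * (1 - a * b) * sqrt R"
    using \<open>R > 0\<close> by (metis real_div_sqrt less_imp_le times_divide_eq_right)
  also have "\<dots> = 4 * area_density_factor a b"
    by (simp add: R_def area_density_factor_def field_simps)
  finally show ?thesis .
qed

(* unit_normal a b = V / |V| with V = (a + b, b - a, 1 + ab); the radicand is |V|^2.  Its partial
   derivatives do not vanish because those of V are not parallel to V, while differentiating the
   normalising factor only adds a multiple of V. *)
lemma numerator_partial_fst_independent:
  assumes "s *\<^sub>R vector [1, -1, b] + t *\<^sub>R vector [a + b, -a + b, 1 + a * b] = (0::real^3)"
  shows "s = 0"
proof -
  from assms have "s + t * (a + b) = 0" "- s + t * (- a + b) = 0" "s * b + t * (1 + a * b) = 0"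
    by (auto simp: vec_eq_iff forall_3)
  then have "t * b = 0" by algebra
  with \<open>s * b + t * (1 + a * b) = 0\<close> have "t = 0" by auto
  with \<open>s + t * (a + b) = 0\<close> show ?thesis by simp
qed

lemma numerator_partial_snd_independent:
  assumes "s *\<^sub>R vector [1, 1, a] + t *\<^sub>R vector [a + b, -a + b, 1 + a * b] = (0::real^3)"
  shows "s = 0"
proof -
  from assms have "s + t * (a + b) = 0" "s + t * (- a + b) = 0" "s * a + t * (1 + a * b) = 0"
    by (auto simp: vec_eq_iff forall_3)
  then have "t * a = 0" by algebra
  with \<open>s * a + t * (1 + a * b) = 0\<close> have "t = 0" by auto
  with \<open>s + t * (a + b) = 0\<close> show ?thesis by simp
qed

lemma unit_normal_has_derivative:
  obtains N where "((\<lambda>x. unit_normal (fst x) (snd x)) has_derivative N) (at (a, b))"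
    and "N (1, 0) \<noteq> 0" and "N (0, 1) \<noteq> 0"
proof -
  define r where "r = (\<lambda>x::real \<times> real. 1 / sqrt ((1 - fst x * snd x)\<^sup>2 + 2 * (fst x + snd x)\<^sup>2))"
  define V where "V = (\<lambda>x::real \<times> real. fst x *\<^sub>R vector [1, -1, 0] + snd x *\<^sub>R vector [1, 1, 0]
    + (1 + fst x * snd x) *\<^sub>R vector [0, 0, 1] :: real^3)"
  have unit_normal_eq: "(\<lambda>x. unit_normal (fst x) (snd x)) = (\<lambda>x. r x *\<^sub>R V x)"
    by (simp add: fun_eq_iff unit_normal_def r_def V_def vec_eq_iff forall_3)
  have "r (a, b) \<noteq> 0" using unit_normal_denominator_pos[of a b] by (simp add: r_def)
  have V_ab: "V (a, b) = vector [a + b, -a + b, 1 + a * b]"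
    by (simp add: V_def vec_eq_iff forall_3)
  have "\<exists>r'. (r has_derivative r') (at (a, b))"
    unfolding r_def using unit_normal_denominator_pos[of a b]
    by (intro exI) (rule derivative_eq_intros refl | simp)+
  then obtain r' where r': "(r has_derivative r') (at (a, b))" ..
  have V': "(V has_derivative (\<lambda>z. fst z *\<^sub>R vector [1, -1, b] + snd z *\<^sub>R vector [1, 1, a])) (at (a, b))"
    unfolding V_def
    by (rule derivative_eq_intros refl | simp)+ (simp add: fun_eq_iff vec_eq_iff forall_3 algebra_simps)
  define N where "N z = r (a, b) *\<^sub>R (fst z *\<^sub>R vector [1, -1, b] + snd z *\<^sub>R vector [1, 1, a])
    + r' z *\<^sub>R V (a, b)" for z
  have "((\<lambda>x. unit_normal (fst x) (snd x)) has_derivative N) (at (a, b))"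
    unfolding unit_normal_eq N_def using has_derivative_scaleR[OF r' V'] by (simp add: add.commute)
  moreover have "N (1, 0) \<noteq> 0"
    using numerator_partial_fst_independent[of "r (a, b)" b "r' (1, 0)" a] \<open>r (a, b) \<noteq> 0\<close>
    by (auto simp: N_def V_ab)
  moreover have "N (0, 1) \<noteq> 0"
    using numerator_partial_snd_independent[of "r (a, b)" a "r' (0, 1)" b] \<open>r (a, b) \<noteq> 0\<close>
    by (auto simp: N_def V_ab)
  ultimately show thesis using that by blast
qed

lemma normal_of_has_derivative:
  assumes "(g1 has_real_derivative d1) (at u)" and "(g2 has_real_derivative d2) (at v)"
  obtains na nb where "na \<noteq> 0" and "nb \<noteq> 0"
    and "(normal_of g1 g2 has_derivative (\<lambda>z. fst z *\<^sub>R (d1 *\<^sub>R na) + snd z *\<^sub>R (d2 *\<^sub>R nb))) (at (u, v))"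
proof -
  obtain N where N: "((\<lambda>x. unit_normal (fst x) (snd x)) has_derivative N) (at (g1 u, g2 v))"
    and "N (1, 0) \<noteq> 0" and "N (0, 1) \<noteq> 0"
    using unit_normal_has_derivative .
  have G: "((\<lambda>q. (g1 (fst q), g2 (snd q))) has_derivative (\<lambda>z. (fst z *\<^sub>R d1, snd z *\<^sub>R d2))) (at (u, v))"
    using assms by (intro has_derivative_Pair has_derivative_fst_compose has_derivative_snd_compose)
      (simp_all add: has_real_derivative_iff_has_vector_derivative)
  have "normal_of g1 g2 = (\<lambda>q. unit_normal (g1 (fst q)) (g2 (snd q)))"
    by (simp add: fun_eq_iff normal_of_def)
  then have "(normal_of g1 g2 has_derivative (\<lambda>z. N (fst z *\<^sub>R d1, snd z *\<^sub>R d2))) (at (u, v))"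
    using has_derivative_compose[OF G, of "\<lambda>x. unit_normal (fst x) (snd x)" N] N by simp
  moreover have "(\<lambda>z. N (fst z *\<^sub>R d1, snd z *\<^sub>R d2))
      = (\<lambda>z. fst z *\<^sub>R (d1 *\<^sub>R N (1, 0)) + snd z *\<^sub>R (d2 *\<^sub>R N (0, 1)))"
  proof
    fix z :: "real \<times> real"
    show "N (fst z *\<^sub>R d1, snd z *\<^sub>R d2) = fst z *\<^sub>R (d1 *\<^sub>R N (1, 0)) + snd z *\<^sub>R (d2 *\<^sub>R N (0, 1))"
      using linear_pair_eq[OF has_derivative_linear[OF N], of "fst z *\<^sub>R d1" "snd z *\<^sub>R d2"] by simp
  qed
  ultimately have "(normal_of g1 g2 has_derivative
      (\<lambda>z. fst z *\<^sub>R (d1 *\<^sub>R N (1, 0)) + snd z *\<^sub>R (d2 *\<^sub>R N (0, 1)))) (at (u, v))"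
    by simp
  with \<open>N (1, 0) \<noteq> 0\<close> \<open>N (0, 1) \<noteq> 0\<close> show thesis using that by blast
qed

lemma gen_timelike_min_surface_data_has_derivative:
  assumes "gen_timelike_min_surface I J g1 w1 g2 w2 f" and "u \<in> I" and "v \<in> J"
  shows "(g1 has_real_derivative deriv g1 u) (at u)" and "(w1 has_real_derivative deriv w1 u) (at u)"
    and "(g2 has_real_derivative deriv g2 v) (at v)" and "(w2 has_real_derivative deriv w2 v) (at v)"
  using assms smooth_real_on_has_real_derivative unfolding gen_timelike_min_surface_def by blast+

lemma gen_timelike_min_surface_has_derivative:
  assumes surf: "gen_timelike_min_surface I J g1 w1 g2 w2 f" and "u \<in> I" and "v \<in> J"
  shows "(f has_derivative (\<lambda>z. fst z *\<^sub>R ((1/2 * w1 u) *\<^sub>R nullU (g1 u))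
                               + snd z *\<^sub>R ((1/2 * w2 v) *\<^sub>R nullV (g2 v)))) (at (u, v))"
proof -
  obtain F1 F2 where F1: "\<forall>u\<in>I. (F1 has_vector_derivative ((1/2 * w1 u) *\<^sub>R nullU (g1 u))) (at u)"
    and F2: "\<forall>v\<in>J. (F2 has_vector_derivative ((1/2 * w2 v) *\<^sub>R nullV (g2 v))) (at v)"
    and f_eq: "\<forall>u\<in>I. \<forall>v\<in>J. f (u, v) = F1 u + F2 v"
    using surf unfolding gen_timelike_min_surface_def by blast
  have "open (I \<times> J)" using surf by (simp add: gen_timelike_min_surface_def open_Times)
  have "((\<lambda>q. F1 (fst q) + F2 (snd q)) has_derivative (\<lambda>z. fst z *\<^sub>R ((1/2 * w1 u) *\<^sub>R nullU (g1 u))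
                               + snd z *\<^sub>R ((1/2 * w2 v) *\<^sub>R nullV (g2 v)))) (at (u, v))"
    using F1 F2 assms by (intro has_derivative_add has_derivative_fst_compose has_derivative_snd_compose) auto
  then show ?thesis
    by (rule has_derivative_transform_within_open[OF _ \<open>open (I \<times> J)\<close>]) (use assms f_eq in auto)
qed

lemma gen_timelike_min_surface_area_density:
  assumes "gen_timelike_min_surface I J g1 w1 g2 w2 f" and "u \<in> I" and "v \<in> J"
  shows "area_density f (normal_of g1 g2) (u, v) = w1 u * w2 v * area_density_factor (g1 u) (g2 v)"
proof -
  have "partial_u f (u, v) = (1/2 * w1 u) *\<^sub>R nullU (g1 u)" "partial_v f (u, v) = (1/2 * w2 v) *\<^sub>R nullV (g2 v)"
    unfolding partial_u_def partial_v_def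
      frechet_derivative_at[OF gen_timelike_min_surface_has_derivative[OF assms], symmetric] by simp_all
  then have "area_density f (normal_of g1 g2) (u, v)
      = det3 ((1/2 * w1 u) *\<^sub>R nullU (g1 u)) ((1/2 * w2 v) *\<^sub>R nullV (g2 v)) (1 *\<^sub>R unit_normal (g1 u) (g2 v))"
    by (simp add: area_density_def normal_of_def)
  also have "\<dots> = w1 u * w2 v * area_density_factor (g1 u) (g2 v)"
    by (simp only: det3_scaleR det3_nullU_nullV_unit_normal)
  finally show ?thesis .
qed

lemma gen_timelike_min_surface_area_density_has_derivative:
  assumes surf: "gen_timelike_min_surface I J g1 w1 g2 w2 f" and "u \<in> I" and "v \<in> J"
  obtains D where "(area_density f (normal_of g1 g2) has_derivative
      (\<lambda>z. w1 u * w2 v * D z + (w1 u * (snd z * deriv w2 v) + fst z * deriv w1 u * w2 v)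
                                 * area_density_factor (g1 u) (g2 v))) (at (u, v))"
proof -
  note data = gen_timelike_min_surface_data_has_derivative[OF assms, unfolded has_real_derivative_iff_has_vector_derivative]
  have G: "((\<lambda>q. (g1 (fst q), g2 (snd q))) has_derivative (\<lambda>z. (fst z *\<^sub>R deriv g1 u, snd z *\<^sub>R deriv g2 v))) (at (u, v))"
    using data by (intro has_derivative_Pair has_derivative_fst_compose has_derivative_snd_compose) simp_all
  obtain D0 where D0: "((\<lambda>x. area_density_factor (fst x) (snd x)) has_derivative D0) (at (g1 u, g2 v))"
    using area_density_factor_differentiable by (auto simp: differentiable_def)
  define L where "L z = w1 u * w2 v * D0 (fst z *\<^sub>R deriv g1 u, snd z *\<^sub>R deriv g2 v)
    + (w1 u * (snd z * deriv w2 v) + fst z * deriv w1 u * w2 v) * area_density_factor (g1 u) (g2 v)" for z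
  have "((\<lambda>q. area_density_factor (g1 (fst q)) (g2 (snd q))) has_derivative
          (\<lambda>z. D0 (fst z *\<^sub>R deriv g1 u, snd z *\<^sub>R deriv g2 v))) (at (u, v))"
    using has_derivative_compose[OF G, of "\<lambda>x. area_density_factor (fst x) (snd x)" D0] D0 by simp
  moreover have "((\<lambda>q. w1 (fst q) * w2 (snd q)) has_derivative
      (\<lambda>z. w1 u * (snd z * deriv w2 v) + fst z * deriv w1 u * w2 v)) (at (u, v))"
    using has_derivative_mult[OF has_derivative_fst_compose[of w1 "deriv w1 u" "(u, v)"]
        has_derivative_snd_compose[of w2 "deriv w2 v" "(u, v)"]] data by simp
  ultimately have "((\<lambda>q. w1 (fst q) * w2 (snd q) * area_density_factor (g1 (fst q)) (g2 (snd q)))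
      has_derivative L) (at (u, v))"
    unfolding L_def using has_derivative_mult by fastforce
  moreover have "open (I \<times> J)" using surf by (simp add: gen_timelike_min_surface_def open_Times)
  ultimately have "(area_density f (normal_of g1 g2) has_derivative L) (at (u, v))"
    by (rule has_derivative_transform_within_open) (use assms gen_timelike_min_surface_area_density[OF surf] in auto)
  then show thesis unfolding L_def by (rule that)
qed

lemma gen_timelike_min_surface_front_at_iff:
  assumes "gen_timelike_min_surface I J g1 w1 g2 w2 f" and "u \<in> I" and "v \<in> J"
  shows "w1 u = 0 \<Longrightarrow> w2 v \<noteq> 0 \<Longrightarrow> front_at f (normal_of g1 g2) (u, v) \<longleftrightarrow> deriv g1 u \<noteq> 0"
    and "w2 v = 0 \<Longrightarrow> w1 u \<noteq> 0 \<Longrightarrow> front_at f (normal_of g1 g2) (u, v) \<longleftrightarrow> deriv g2 v \<noteq> 0"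
proof -
  note data = gen_timelike_min_surface_data_has_derivative[OF assms]
  obtain na nb where "na \<noteq> 0" and "nb \<noteq> 0" and normal:
    "(normal_of g1 g2 has_derivative (\<lambda>z. fst z *\<^sub>R (deriv g1 u *\<^sub>R na) + snd z *\<^sub>R (deriv g2 v *\<^sub>R nb))) (at (u, v))"
    using normal_of_has_derivative[OF data(1) data(3)] .
  define fu where "fu = (1/2 * w1 u) *\<^sub>R nullU (g1 u)"
  define fv where "fv = (1/2 * w2 v) *\<^sub>R nullV (g2 v)"
  from has_derivative_Pair[OF gen_timelike_min_surface_has_derivative[OF assms] normal]
  have front: "front_at f (normal_of g1 g2) (u, v) \<longleftrightarrow>
      inj (\<lambda>z. (fst z *\<^sub>R fu + snd z *\<^sub>R fv, fst z *\<^sub>R (deriv g1 u *\<^sub>R na) + snd z *\<^sub>R (deriv g2 v *\<^sub>R nb)))"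
    unfolding front_at_def fu_def fv_def by (rule immersion_at_iff_inj)
  show "front_at f (normal_of g1 g2) (u, v) \<longleftrightarrow> deriv g1 u \<noteq> 0" if "w1 u = 0" and "w2 v \<noteq> 0"
  proof -
    have "fu = 0" and "fv \<noteq> 0" using that nullV_neq_0 by (simp_all add: fu_def fv_def)
    with inj_pair_scaleR_iff_snd[of fv "deriv g1 u *\<^sub>R na" "deriv g2 v *\<^sub>R nb"]
    show ?thesis using front \<open>na \<noteq> 0\<close> by simp
  qed
  show "front_at f (normal_of g1 g2) (u, v) \<longleftrightarrow> deriv g2 v \<noteq> 0" if "w2 v = 0" and "w1 u \<noteq> 0"
  proof -
    have "fv = 0" and "fu \<noteq> 0" using that nullU_neq_0 by (simp_all add: fu_def fv_def)
    with inj_pair_scaleR_iff_fst[of fu "deriv g1 u *\<^sub>R na" "deriv g2 v *\<^sub>R nb"]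
    show ?thesis using front \<open>nb \<noteq> 0\<close> by simp
  qed
qed

lemma fst_times_eq_0_iff: "(\<lambda>z::real \<times> real. fst z * c) = (\<lambda>_. 0) \<longleftrightarrow> c = 0"
  by (auto simp: fun_eq_iff dest: spec[of _ "(1, 0)"])

lemma snd_times_eq_0_iff: "(\<lambda>z::real \<times> real. snd z * c) = (\<lambda>_. 0) \<longleftrightarrow> c = 0"
  by (auto simp: fun_eq_iff dest: spec[of _ "(0, 1)"])

lemma gen_timelike_min_surface_nondegenerate_iff:
  assumes "gen_timelike_min_surface I J g1 w1 g2 w2 f" and "u \<in> I" and "v \<in> J"
  shows "w1 u = 0 \<Longrightarrow> nondegenerate f (normal_of g1 g2) (u, v) \<longleftrightarrow>
      deriv w1 u * w2 v * area_density_factor (g1 u) (g2 v) \<noteq> 0"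
    and "w2 v = 0 \<Longrightarrow> nondegenerate f (normal_of g1 g2) (u, v) \<longleftrightarrow>
      w1 u * deriv w2 v * area_density_factor (g1 u) (g2 v) \<noteq> 0"
proof -
  obtain D where derivative: "(area_density f (normal_of g1 g2) has_derivative
      (\<lambda>z. w1 u * w2 v * D z + (w1 u * (snd z * deriv w2 v) + fst z * deriv w1 u * w2 v)
                                 * area_density_factor (g1 u) (g2 v))) (at (u, v))"
    using gen_timelike_min_surface_area_density_has_derivative[OF assms] .
  show "nondegenerate f (normal_of g1 g2) (u, v) \<longleftrightarrow>
      deriv w1 u * w2 v * area_density_factor (g1 u) (g2 v) \<noteq> 0" if "w1 u = 0"
  proof -
    from derivative that have "(area_density f (normal_of g1 g2) has_derivative
        (\<lambda>z. fst z * (deriv w1 u * w2 v * area_density_factor (g1 u) (g2 v)))) (at (u, v))"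
      by (simp add: mult_ac)
    then show ?thesis by (simp add: nondegenerate_iff_derivative_neq_0 fst_times_eq_0_iff)
  qed
  show "nondegenerate f (normal_of g1 g2) (u, v) \<longleftrightarrow>
      w1 u * deriv w2 v * area_density_factor (g1 u) (g2 v) \<noteq> 0" if "w2 v = 0"
  proof -
    from derivative that have "(area_density f (normal_of g1 g2) has_derivative
        (\<lambda>z. snd z * (w1 u * deriv w2 v * area_density_factor (g1 u) (g2 v)))) (at (u, v))"
      by (simp add: mult_ac)
    then show ?thesis by (simp add: nondegenerate_iff_derivative_neq_0 snd_times_eq_0_iff)
  qed
qed

theorem lemma4p1:
  fixes I J :: "real set" and g1 w1 g2 w2 :: "real \<Rightarrow> real"
    and f :: "real \<times> real \<Rightarrow> real^3" and u0 v0 :: real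
  assumes surf: "gen_timelike_min_surface I J g1 w1 g2 w2 f"
    and pI: "u0 \<in> I" and pJ: "v0 \<in> J"
    and sing: "singular_point f (u0, v0)"
    and w: "w1 u0 * w2 v0 = 0"
    and rank: "dim (range (frechet_derivative f (at (u0, v0)))) = 1"
  shows "(w1 u0 = 0 \<longrightarrow> (front_at f (normal_of g1 g2) (u0, v0) \<longleftrightarrow> deriv g1 u0 \<noteq> 0))
       \<and> (w2 v0 = 0 \<longrightarrow> (front_at f (normal_of g1 g2) (u0, v0) \<longleftrightarrow> deriv g2 v0 \<noteq> 0))
       \<and> (w1 u0 = 0 \<longrightarrow> (nondegenerate f (normal_of g1 g2) (u0, v0)
                          \<longleftrightarrow> deriv w1 u0 \<noteq> 0 \<and> g1 u0 * g2 v0 \<noteq> 1))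
       \<and> (w2 v0 = 0 \<longrightarrow> (nondegenerate f (normal_of g1 g2) (u0, v0)
                          \<longleftrightarrow> deriv w2 v0 \<noteq> 0 \<and> g1 u0 * g2 v0 \<noteq> 1))"
proof -
  have "w1 u0 \<noteq> 0 \<or> w2 v0 \<noteq> 0"
    using dim_range_derivative_neq_0[OF gen_timelike_min_surface_has_derivative[OF surf pI pJ]] rank
    by auto
  with w consider "w1 u0 = 0" and "w2 v0 \<noteq> 0" | "w2 v0 = 0" and "w1 u0 \<noteq> 0" by auto
  then show ?thesis
  proof cases
    case 1
    then show ?thesis
      using gen_timelike_min_surface_front_at_iff(1)[OF surf pI pJ] gen_timelike_min_surface_nondegenerate_iff(1)[OF surf pI pJ]
        area_density_factor_eq_0_iff by auto
  next
    case 2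
    then show ?thesis
      using gen_timelike_min_surface_front_at_iff(2)[OF surf pI pJ] gen_timelike_min_surface_nondegenerate_iff(2)[OF surf pI pJ]
        area_density_factor_eq_0_iff by auto
  qed
qed

end
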